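(* Let $p$ be an odd prime, $\alpha$ an indeterminate over $\mathbb F_p$, and $G^{(\alpha)}(X)=-\sum_{k=1}^{p-1}\frac{1}{k}\frac{X^{k}}{\prod_{s=1}^{k-1}b_{1,s}(\alpha)}\in\mathbb F_p(\alpha)[X]$ (empty product equal to $1$). Then \[ L_{p-1}^{(\alpha)}\bigl(G^{(\alpha)}(X)\bigr)\equiv X\pmod{X^p-L_{p-1}^{(\alpha^p)}(\alpha^p-\alpha)} \] in the polynomial ring $\mathbb F_p(\alpha)[X]$, where $L_{p-1}^{(\alpha^p)}(\alpha^p-\alpha)$ denotes the element of $\mathbb F_p[\alpha]$ obtained from $L_{p-1}^{(\alpha)}(X)$ by substituting $\alpha^p$ for $\alpha$ and $\alpha^p-\alpha$ for $X$.
   Context: $\mathbb F_p$ is the field of $p$ elements. $L_{p-1}^{(\alpha)}(X)\in\mathbb F_p[\alpha,X]$ is defined by $L_{p-1}^{(\alpha)}(X)=\sum_{k=0}^{p-1}\binom{\alpha-1}{p-1-k}\frac{(-X)^k}{k!}$, where $\binom{x}{m}=x(x-1)\cdots(x-m+1)/m!$. For integers $0<r,s<p$ (interpreted as elements of $\mathbb F_p$), $b_{r,s}(\alpha)=\sum_{k=0}^{p-1}(-r/s)^k\binom{r\alpha-1}{p-1-k}\binom{s\alpha-1}{k}\in\mathbb F_p[\alpha]$. *)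

theory Defs
  imports "HOL-Computational_Algebra.Polynomial" "HOL-Computational_Algebra.Fraction_Field" "HOL-Library.Cardinality"
begin

definition gbin :: "'b::field \<Rightarrow> nat \<Rightarrow> 'b" where
  "gbin x m = (\<Prod>i<m. x - of_nat i) / of_nat (fact m)"

definition alpha :: "'a::field poly fract" where
  "alpha = Fract [:0, 1:] 1"

text \<open>L_{p-1}^{(a)}(X) = sum_{k=0}^{p-1} binom(a-1, p-1-k) (-X)^k / k!, as a polynomial in X
  with the parameter a specialised to an element of the field.\<close>
definition lag_poly :: "nat \<Rightarrow> 'b::field \<Rightarrow> 'b poly" where
  "lag_poly p a = (\<Sum>k<p. monom (gbin (a - 1) (p - 1 - k) * (-1) ^ k / of_nat (fact k)) k)"

definition bcoef :: "nat \<Rightarrow> nat \<Rightarrow> nat \<Rightarrow> 'b::field \<Rightarrow> 'b" where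
  "bcoef p r s a = (\<Sum>k<p. (- (of_nat r / of_nat s)) ^ k
       * gbin (of_nat r * a - 1) (p - 1 - k) * gbin (of_nat s * a - 1) k)"

definition Gpoly :: "nat \<Rightarrow> 'b::field \<Rightarrow> 'b poly" where
  "Gpoly p a = - (\<Sum>k\<in>{1..p-1}. monom ((1 / of_nat k) / (\<Prod>s\<in>{1..k-1}. bcoef p 1 s a)) k)"

end

(* Fix a parameter a whose values b_{1,s}(a), 0 < s < p - 1, are nonzero, and write
   m = X^p - (a^p - a) and M_r(X) = L_{p-1}^{(r a)}(r X), so that M_1 = L := L_{p-1}^{(a)}.
   Each M_r satisfies the first-order congruence X M_r' = r (X - a) M_r (mod m), and a
   polynomial of degree < p satisfying such a congruence is determined by its coefficient of
   X^(p-1).  Comparing these coefficients gives M_1 M_s = b_{1,s}(a) M_(s+1) (mod m), hence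
   L^k = b_{1,1}(a) ... b_{1,k-1}(a) M_k (mod m), and a power-sum computation over F_p turns
   this into G(L) = X (mod m).  By Frobenius, L^p = L_{p-1}^{(a^p)}(X^p) = c (mod m) with
   c = L_{p-1}^{(a^p)}(a^p - a).  So f |-> f(L) mod m maps F[X]/(X^p - c) onto F[X]/(m), since
   X = G(L) lies in the image; both spaces have dimension p, so the map is injective, and
   L(G) - X lies in its kernel.  For a = alpha the b_{1,s}(alpha) are nonzero because they
   take the value 1 at alpha = 0. *)

theory Submission
  imports Defs "HOL-Computational_Algebra.Polynomial_Factorial"
begin

section \<open>Arithmetic in characteristic p\<close>

lemma of_nat_neq_0_CHAR:
  assumes "CHAR('k::semiring_1) = p" "0 < n" "n < p"
  shows "(of_nat n :: 'k) \<noteq> 0"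
  using assms by (auto simp: of_nat_eq_0_iff_char_dvd dest: dvd_imp_le)

lemma of_nat_inj_CHAR:
  assumes "CHAR('k::semiring_1_cancel) = p" "i < p" "j < p" "(of_nat i :: 'k) = of_nat j"
  shows "i = j"
proof -
  have "\<not> (of_nat i' :: 'k) = of_nat j'" if "i' < j'" "j' < p" for i' j'
    using that assms(1) by (auto simp: of_nat_eq_iff_char_dvd dest: dvd_imp_le)
  then show ?thesis using assms(2-4) by (metis linorder_neqE_nat)
qed

lemma of_nat_diff_CHAR:
  assumes "CHAR('k::ring_1) = p" "k \<le> p"
  shows "(of_nat (p - k) :: 'k) = - of_nat k"
proof -
  have "(of_nat (p - k) :: 'k) + of_nat k = of_nat p"
    using assms(2) by (simp flip: of_nat_add)
  then show ?thesis using assms(1) of_nat_CHAR[where 'a='k] by (simp add: eq_neg_iff_add_eq_0)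
qed

lemma power_diff_CHAR:
  assumes "CHAR('k::comm_ring_1) = p" "prime p"
  shows "(x - y :: 'k) ^ p = x ^ p - y ^ p"
proof -
  have "(x + (- y)) ^ p = x ^ p + (- y) ^ p" using assms by (intro freshmans_dream) auto
  moreover have "(- y) ^ p = - (y ^ p)" using assms by (intro minus_power_prime_CHAR) auto
  ultimately show ?thesis by simp
qed

lemma of_nat_power_CHAR:
  assumes "CHAR('k::comm_ring_1) = p" "prime p"
  shows "(of_nat n :: 'k) ^ p = of_nat n"
proof (induction n)
  case 0
  then show ?case using assms(2) prime_gt_0_nat by (simp add: power_0_left)
next
  case (Suc n)
  have "(of_nat n + 1 :: 'k) ^ p = of_nat n ^ p + 1 ^ p"
    using assms by (intro freshmans_dream) auto
  then show ?case using Suc by (simp add: add.commute)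
qed

lemma of_nat_power_pred_CHAR:
  assumes "CHAR('k::field) = p" "prime p" "\<not> p dvd n"
  shows "(of_nat n :: 'k) ^ (p - 1) = 1"
proof -
  have "(of_nat n :: 'k) \<noteq> 0" using assms by (simp add: of_nat_eq_0_iff_char_dvd)
  moreover have "(of_nat n :: 'k) * of_nat n ^ (p - 1) = of_nat n ^ p"
    using prime_gt_0_nat[OF assms(2)] by (metis Suc_diff_1 power_Suc)
  moreover have "(of_nat n :: 'k) ^ p = of_nat n * 1"
    using of_nat_power_CHAR[OF assms(1,2)] by simp
  ultimately show ?thesis by (metis mult_left_cancel)
qed

lemma prod_diff_of_nat_CHAR:
  assumes "CHAR('k::field) = p" "prime p"
  shows "(\<Prod>j\<in>{1..p-1}. (x::'k) - of_nat j) = x ^ (p - 1) - 1"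
proof -
  define P :: "'k poly" where "P = (\<Prod>j\<in>{1..p-1}. [:- of_nat j, 1:])"
  define Q :: "'k poly" where "Q = monom 1 (p - 1) - 1"
  define A :: "'k set" where "A = of_nat ` {1..p-1}"
  have p2: "p \<ge> 2" using assms(2) prime_ge_2_nat by blast
  have degP: "degree P = p - 1" unfolding P_def
    by (subst degree_prod_eq_sum_degree) auto
  have "coeff P (p - 1) = lead_coeff P" using degP by simp
  also have "\<dots> = 1" unfolding P_def by (simp add: lead_coeff_prod)
  finally have lcP: "coeff P (p - 1) = 1" .
  have "P = Q"
  proof (rule poly_eqI_degree_lead_coeff[of P "p - 1" Q A])
    show "coeff P (p - 1) = coeff Q (p - 1)" using lcP p2 by (simp add: Q_def coeff_monom)
    show "degree P \<le> p - 1" using degP by simp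
    show "degree Q \<le> p - 1" unfolding Q_def
      by (metis degree_diff_le degree_monom_le degree_1 le0)
    have "inj_on (of_nat :: nat \<Rightarrow> 'k) {1..p-1}"
      by (rule inj_onI) (use of_nat_inj_CHAR[OF assms(1)] p2 in auto)
    then show "p - 1 \<le> card A" unfolding A_def by (simp add: card_image)
    fix z assume "z \<in> A"
    then obtain j where j: "j \<in> {1..p-1}" "z = of_nat j" unfolding A_def by blast
    have "\<not> p dvd j" using j p2 by (auto dest: dvd_imp_le)
    then have "z ^ (p - 1) = 1" using of_nat_power_pred_CHAR[OF assms] j by simp
    then have "poly Q z = 0" unfolding Q_def by (simp add: poly_monom)
    moreover have "poly P z = 0" unfolding P_def poly_prod using j by (auto intro: prod_zero)
    ultimately show "poly P z = poly Q z" by simp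
  qed
  then have "poly P x = poly Q x" by simp
  then show ?thesis unfolding P_def Q_def by (simp add: poly_prod poly_monom)
qed

lemma fact_pred_CHAR:
  assumes "CHAR('k::field) = p" "prime p" "odd p"
  shows "(of_nat (fact (p - 1)) :: 'k) = -1"
proof -
  have "(\<Prod>j\<in>{1..p-1}. (0::'k) - of_nat j) = (-1) ^ (p - 1) * (\<Prod>j\<in>{1..p-1}. of_nat j)"
    by (simp add: prod_uminus)
  also have "\<dots> = (\<Prod>j\<in>{1..p-1}. of_nat j)" using assms(3) by simp
  also have "\<dots> = of_nat (fact (p - 1))" by (simp add: fact_prod of_nat_prod)
  finally have "(\<Prod>j\<in>{1..p-1}. (0::'k) - of_nat j) = of_nat (fact (p - 1))" .
  moreover have "(0::'k) ^ (p - 1) = 0" using prime_ge_2_nat[OF assms(2)] by (simp add: power_0_left)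
  ultimately show ?thesis using prod_diff_of_nat_CHAR[OF assms(1,2), of 0] by simp
qed

lemma fact_mult_fact_CHAR:
  assumes "CHAR('k::field) = p" "prime p" "odd p" "i < p"
  shows "(of_nat (fact i) * of_nat (fact (p - 1 - i)) :: 'k) = - ((-1) ^ i)"
  using assms(4)
proof (induction i)
  case 0
  then show ?case using fact_pred_CHAR[OF assms(1-3)] by simp
next
  case (Suc i)
  have e: "p - 1 - i = Suc (p - 1 - Suc i)" using Suc.prems by simp
  have e': "(of_nat (p - Suc (Suc i)) :: 'k) = - of_nat (Suc (Suc i))"
    using of_nat_diff_CHAR[OF assms(1), of "Suc (Suc i)"] Suc.prems by simp
  have "(of_nat (fact i) * of_nat (fact (p - 1 - i)) :: 'k) =
      - (of_nat (fact (Suc i)) * of_nat (fact (p - 1 - Suc i)))"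
    unfolding e fact_Suc of_nat_mult by (simp add: e' algebra_simps)
  then show ?case using Suc by simp
qed

lemma sum_of_nat_power_CHAR:
  assumes "CHAR('k::idom) = p" "Suc n < p"
  shows "(\<Sum>k<p. (of_nat k :: 'k) ^ n) = 0"
  using assms(2)
proof (induction n rule: less_induct)
  case (less n)
  have bin: "(of_nat (Suc k) :: 'k) ^ Suc n - of_nat k ^ Suc n =
      (\<Sum>i\<le>n. of_nat (Suc n choose i) * of_nat k ^ i)" for k
    using binomial_ring[of "of_nat k :: 'k" 1 "Suc n"] by (simp add: atMost_Suc add.commute)
  have "(\<Sum>k<p. (of_nat (Suc k) :: 'k) ^ Suc n - of_nat k ^ Suc n) = of_nat p ^ Suc n - of_nat 0 ^ Suc n"
    by (rule sum_lessThan_telescope)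
  also have "\<dots> = 0" using assms(1) of_nat_CHAR[where 'a='k] by simp
  finally have "(\<Sum>i\<le>n. of_nat (Suc n choose i) * (\<Sum>k<p. (of_nat k :: 'k) ^ i)) = 0"
    by (simp only: bin sum.swap[of _ "{..<p}"] sum_distrib_left)
  moreover have "(\<Sum>i<n. of_nat (Suc n choose i) * (\<Sum>k<p. (of_nat k :: 'k) ^ i)) = 0"
    using less by (intro sum.neutral) auto
  ultimately have "of_nat (Suc n) * (\<Sum>k<p. (of_nat k :: 'k) ^ n) = 0"
    by (simp add: lessThan_Suc_atMost[symmetric])
  moreover have "(of_nat (Suc n) :: 'k) \<noteq> 0"
    using of_nat_neq_0_CHAR[OF assms(1)] less.prems by (simp del: of_nat_Suc)
  ultimately show ?case by simp
qed

lemma sum_poly_of_nat_CHAR: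
  assumes "CHAR('k::idom) = p" "Suc (degree P) < p"
  shows "(\<Sum>k<p. poly P (of_nat k :: 'k)) = 0"
proof -
  have "(\<Sum>k<p. poly P (of_nat k :: 'k)) =
      (\<Sum>i\<le>degree P. coeff P i * (\<Sum>k<p. (of_nat k :: 'k) ^ i))"
    by (simp add: poly_altdef sum.swap[of _ "{..<p}"] sum_distrib_left)
  also have "\<dots> = 0" using assms by (intro sum.neutral) (auto intro!: sum_of_nat_power_CHAR)
  finally show ?thesis .
qed

lemma sum_poly_of_nat_nonzero_CHAR:
  assumes "CHAR('k::idom) = p" "Suc (degree P) < p"
  shows "(\<Sum>k\<in>{1..p-1}. poly P (of_nat k :: 'k)) = - poly P 0"
proof -
  have "{..<p} = insert 0 {1..p-1}" using assms(2) by auto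
  then have "(\<Sum>k<p. poly P (of_nat k :: 'k)) = poly P 0 + (\<Sum>k\<in>{1..p-1}. poly P (of_nat k))"
    by simp
  then show ?thesis using sum_poly_of_nat_CHAR[OF assms] by (simp add: eq_neg_iff_add_eq_0 add.commute)
qed

lemma sum_inverse_of_nat_CHAR:
  assumes "CHAR('k::field) = p" "prime p" "odd p"
  shows "(\<Sum>k\<in>{1..p-1}. 1 / (of_nat k :: 'k)) = 0"
proof -
  have p3: "p \<ge> 3" using prime_ge_2_nat[OF assms(2)] assms(3) by presburger
  have "1 / (of_nat k :: 'k) = poly (monom 1 (p - 2)) (of_nat k)" if "k \<in> {1..p-1}" for k
  proof -
    have "(of_nat k :: 'k) * of_nat k ^ (p - 2) = of_nat k ^ (p - 1)"
      using p3 by (simp flip: power_Suc add: Suc_diff_Suc numeral_2_eq_2)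
    also have "\<dots> = 1" using that by (intro of_nat_power_pred_CHAR[OF assms(1,2)]) (auto dest: dvd_imp_le)
    finally have "inverse (of_nat k :: 'k) = of_nat k ^ (p - 2)" by (rule inverse_unique)
    then show ?thesis by (simp add: poly_monom divide_inverse)
  qed
  then have "(\<Sum>k\<in>{1..p-1}. 1 / (of_nat k :: 'k)) =
      (\<Sum>k\<in>{1..p-1}. poly (monom 1 (p - 2)) (of_nat k))"
    by (rule sum.cong[OF refl])
  also have "\<dots> = 0"
    using sum_poly_of_nat_nonzero_CHAR[OF assms(1), of "monom 1 (p - 2)"] p3
    by (simp add: degree_monom_eq poly_monom power_0_left)
  finally show ?thesis .
qed

lemma CHAR_eq_card_prime:
  assumes "CARD('a::{ring_1,finite}) = p" "prime p"
  shows "CHAR('a) = p"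
proof -
  have "(\<Sum>y\<in>UNIV. 1 + y) = (\<Sum>y\<in>UNIV. y :: 'a)"
    by (rule sum.reindex_bij_witness[of _ "\<lambda>y. y - 1" "\<lambda>y. 1 + y"]) simp_all
  moreover have "(\<Sum>y\<in>UNIV. 1 + y) = of_nat CARD('a) + (\<Sum>y\<in>UNIV. y :: 'a)"
    by (simp add: sum.distrib)
  ultimately have "of_nat p = (0::'a)" using assms(1) by simp
  then have "CHAR('a) dvd p" by (simp add: of_nat_eq_0_iff_char_dvd)
  then have "CHAR('a) = 1 \<or> CHAR('a) = p" using assms(2) unfolding prime_nat_iff by blast
  then show ?thesis by simp
qed

lemma to_fract_of_nat: "to_fract (of_nat n) = of_nat n"
  by (simp add: to_fract_def of_nat_fract)

lemma CHAR_fract: "CHAR('a::idom fract) = CHAR('a)"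
proof (rule CHAR_eqI)
  have "to_fract (of_nat CHAR('a) :: 'a) = 0" by simp
  then show "of_nat CHAR('a) = (0 :: 'a fract)" by (simp only: to_fract_of_nat)
  fix n assume "of_nat n = (0 :: 'a fract)"
  then have "to_fract (of_nat n :: 'a) = 0" by (simp only: to_fract_of_nat)
  then show "CHAR('a) dvd n" by (simp add: of_nat_eq_0_iff_char_dvd)
qed

lemma gbin_Suc: "gbin x (Suc m) = gbin x m * (x - of_nat m) / of_nat (Suc m)"
  unfolding gbin_def by (simp add: field_simps)

lemma gbin_minus_1:
  assumes "(of_nat (fact m) :: 'k::field) \<noteq> 0"
  shows "gbin (-1 :: 'k) m = (-1) ^ m"
proof -
  have "(\<Prod>i<m. (-1::'k) - of_nat i) = (-1) ^ m * (\<Prod>i<m. of_nat (Suc i))"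
    by (induction m) (simp_all add: algebra_simps)
  also have "(\<Prod>i<m. of_nat (Suc i) :: 'k) = of_nat (fact m)"
    by (simp add: fact_prod_Suc of_nat_prod atLeast0LessThan)
  finally show ?thesis unfolding gbin_def using assms by simp
qed

lemma gbin_diff_1_pred_CHAR:
  assumes "CHAR('k::field) = p" "prime p" "odd p"
  shows "gbin ((x::'k) - 1) (p - 1) = 1 - x ^ (p - 1)"
proof -
  have "(\<Prod>i<p-1. x - 1 - of_nat i) = (\<Prod>j\<in>{1..p-1}. x - of_nat j)"
    by (rule prod.reindex_bij_witness[of _ "\<lambda>j. j - 1" Suc]) (auto simp: algebra_simps)
  then show ?thesis
    unfolding gbin_def using prod_diff_of_nat_CHAR[OF assms(1,2), of x] fact_pred_CHAR[OF assms]
    by (simp add: field_simps)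
qed

lemma gbin_power_CHAR:
  assumes "CHAR('k::field) = p" "prime p"
  shows "gbin (x::'k) m ^ p = gbin (x ^ p) m"
  unfolding gbin_def power_divide prod_power_distrib of_nat_power_CHAR[OF assms]
  by (simp add: power_diff_CHAR[OF assms] of_nat_power_CHAR[OF assms])

definition gbin_poly :: "nat \<Rightarrow> 'k::field poly \<Rightarrow> 'k poly" where
  "gbin_poly m q = smult (inverse (of_nat (fact m))) (\<Prod>i<m. q - of_nat i)"

lemma poly_gbin_poly: "poly (gbin_poly m q) x = gbin (poly q x) m"
  unfolding gbin_poly_def gbin_def by (simp add: poly_prod divide_inverse mult.commute)

lemma degree_gbin_poly_le: "degree (gbin_poly m q) \<le> m * degree q"
proof -
  have "degree (\<Prod>i<m. q - of_nat i) \<le> (\<Sum>i<m. degree (q - of_nat i))"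
    by (rule degree_prod_sum_le[unfolded o_def]) simp
  also have "\<dots> \<le> (\<Sum>i<m. degree q)"
    by (intro sum_mono) (simp add: of_nat_poly degree_diff_le)
  finally show ?thesis unfolding gbin_poly_def by (simp add: mult.commute)
qed

lemma sum_power_mult_gbin_CHAR:
  assumes "CHAR('k::field) = p" "prime p" "0 < j" "j < p"
  shows "(\<Sum>k\<in>{1..p-1}. (of_nat k :: 'k) ^ (j - 1) * gbin (of_nat k * a - 1) (p - 1 - j)) =
    - (0 ^ (j - 1) * gbin (-1) (p - 1 - j))"
proof -
  define P :: "'k poly" where "P = monom 1 (j - 1) * gbin_poly (p - 1 - j) [:-1, a:]"
  have "poly P x = x ^ (j - 1) * gbin (x * a - 1) (p - 1 - j)" for x
    unfolding P_def by (simp add: poly_monom poly_gbin_poly algebra_simps)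
  moreover have "degree (gbin_poly (p - 1 - j) [:-1, a:]) \<le> p - 1 - j"
    using degree_gbin_poly_le[of "p - 1 - j" "[:-1, a:]"] degree_pCons_le[of "-1" "[:a:]"]
    by (metis One_nat_def degree_pCons_0 mult.right_neutral mult_le_mono2 order.trans)
  then have "degree P \<le> (j - 1) + (p - 1 - j)"
    unfolding P_def by (intro order.trans[OF degree_mult_le] add_mono) (auto simp: degree_monom_le)
  then have "Suc (degree P) < p" using assms(3,4) by linarith
  ultimately show ?thesis
    using sum_poly_of_nat_nonzero_CHAR[OF assms(1), of P] by (simp add: mult.commute)
qed

section \<open>The operator y \<mapsto> X y' - l y\<close>

definition euler_op :: "'a::idom poly \<Rightarrow> 'a poly \<Rightarrow> 'a poly" where
  "euler_op l y = pCons 0 (pderiv y) - l * y"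

lemma coeff_euler_op_Suc:
  "coeff (euler_op [:d, c:] y) (Suc n) = (of_nat (Suc n) - d) * coeff y (Suc n) - c * coeff y n"
  unfolding euler_op_def by (simp add: coeff_pderiv algebra_simps)

lemma euler_op_add: "euler_op l (y + z) = euler_op l y + euler_op l z"
  unfolding euler_op_def by (simp add: pderiv_add algebra_simps)

lemma euler_op_diff_smult: "euler_op l (y - smult c z) = euler_op l y - smult c (euler_op l z)"
  unfolding euler_op_def
  by (rule poly_eqI) (simp add: coeff_pCons pderiv_diff pderiv_smult algebra_simps split: nat.split)

lemma euler_op_mult: "euler_op (l + l') (y * z) = z * euler_op l y + y * euler_op l' z"
  unfolding euler_op_def by (simp add: pderiv_mult algebra_simps)

lemma euler_op_pcompose_dilate:
  "pcompose (euler_op l y) [:0, r:] = euler_op (pcompose l [:0, r:]) (pcompose y [:0, r:])"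
  unfolding euler_op_def
  by (simp add: pcompose_diff pcompose_mult pcompose_pCons pderiv_pcompose pderiv_pCons)

lemma euler_op_eq_0_iff:
  assumes "c \<noteq> 0"
  shows "euler_op [:d, c:] y = 0 \<longleftrightarrow> y = 0"
proof
  assume "euler_op [:d, c:] y = 0"
  then have "c * lead_coeff y = 0"
    using coeff_euler_op_Suc[of d c y "degree y"] by (simp add: coeff_eq_0)
  then show "y = 0" using assms by simp
qed (simp add: euler_op_def)

lemma dvd_euler_op_mod:
  assumes "pderiv m = 0" "m dvd euler_op l F"
  shows "m dvd euler_op l (F mod m)"
proof -
  have "euler_op l (F div m * m) = m * euler_op l (F div m)"
    using euler_op_mult[of l 0 "F div m" m] assms(1) by (simp add: euler_op_def)
  then have "euler_op l F = m * euler_op l (F div m) + euler_op l (F mod m)"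
    using euler_op_add[of l "F div m * m" "F mod m"] by simp
  then show ?thesis using assms(2) by (metis dvd_add_right_iff dvd_triv_left)
qed

lemma dvd_euler_op_imp_eq_0:
  assumes "degree m = p" "m dvd euler_op [:d, c:] y" "c \<noteq> 0" "degree y < p" "coeff y (p - 1) = 0"
  shows "y = 0"
proof -
  define z where "z = euler_op [:d, c:] y"
  obtain n where n: "p = Suc n" using assms(4) by (cases p) auto
  have "degree z \<le> n"
  proof (rule degree_le, intro allI impI)
    fix i assume "n < i"
    then obtain j where j: "i = Suc j" "n \<le> j" by (cases i) auto
    have "coeff y j = 0" "coeff y (Suc j) = 0"
      using j(2) assms(4,5) n by (cases "j = n"; simp add: coeff_eq_0)+
    then show "coeff z i = 0" unfolding z_def j(1) coeff_euler_op_Suc by simp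
  qed
  then have "degree z < p" using n by simp
  then have "z = 0"
    using assms(1,2) dvd_imp_degree_le[of m z] unfolding z_def by fastforce
  then show ?thesis using assms(3) euler_op_eq_0_iff unfolding z_def by blast
qed

section \<open>The polynomials L_{p-1}^{(r a)}(r X)\<close>

lemma coeff_lag_poly:
  "coeff (lag_poly p b) n = (if n < p then gbin (b - 1) (p - 1 - n) * (-1) ^ n / of_nat (fact n) else 0)"
  unfolding lag_poly_def by (simp add: coeff_sum coeff_monom)

lemma degree_lag_poly:
  assumes "0 < p"
  shows "degree (lag_poly p b) < p"
proof -
  have "degree (lag_poly p b) \<le> p - 1" by (rule degree_le) (auto simp: coeff_lag_poly)
  then show ?thesis using assms by simp
qed

lemma coeff_lag_poly_pred:
  assumes "CHAR('k::field) = p" "prime p" "odd p"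
  shows "coeff (lag_poly p (b::'k)) (p - 1) = -1"
  using fact_pred_CHAR[OF assms] prime_gt_0_nat[OF assms(2)] assms(3)
  by (simp add: coeff_lag_poly gbin_def)

lemma coeff_lag_poly_Suc_CHAR:
  assumes "CHAR('k::field) = p" "prime p" "Suc k < p"
  shows "(of_nat (Suc k) + b) * coeff (lag_poly p (b::'k)) (Suc k) = coeff (lag_poly p b) k"
proof -
  define G0 where "G0 = gbin (b - 1) (p - 1 - k)"
  define G1 where "G1 = gbin (b - 1) (p - 1 - Suc k)"
  define K where "K = (of_nat (Suc k) :: 'k)"
  define F where "F = (of_nat (fact k) :: 'k)"
  have "(of_nat (p - 1 - Suc k) :: 'k) = - of_nat (Suc (Suc k))"
    "(of_nat (Suc (p - 1 - Suc k)) :: 'k) = - K"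
    using of_nat_diff_CHAR[OF assms(1), of "Suc (Suc k)"] of_nat_diff_CHAR[OF assms(1), of "Suc k"] assms(3)
    unfolding K_def by (simp_all add: Suc_diff_Suc)
  then have G: "G0 = G1 * (b + K) / - K"
    using assms(3) unfolding G0_def G1_def K_def
    by (simp add: gbin_Suc Suc_diff_Suc[symmetric] algebra_simps)
  have KF: "K \<noteq> 0" "F \<noteq> 0"
    using of_nat_neq_0_CHAR[OF assms(1)] assms(1,3) prime_dvd_fact_iff[OF assms(2)]
    unfolding K_def F_def by (auto simp: of_nat_eq_0_iff_char_dvd simp del: of_nat_Suc)
  have cS: "coeff (lag_poly p b) (Suc k) = G1 * - ((-1) ^ k) / (K * F)"
    using assms(3) unfolding G1_def K_def F_def by (simp add: coeff_lag_poly algebra_simps)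
  have c0: "coeff (lag_poly p b) k = G0 * (-1) ^ k / F"
    using assms(3) unfolding G0_def F_def by (simp add: coeff_lag_poly)
  show ?thesis unfolding K_def[symmetric] cS c0 G using KF by (simp add: field_simps)
qed

lemma euler_op_lag_poly:
  assumes "CHAR('k::field) = p" "prime p" "odd p"
  shows "euler_op [:-b, 1:] (lag_poly p (b::'k)) = monom 1 p + [:b - b ^ p:]"
proof (rule poly_eqI)
  fix n
  have p2: "p \<ge> 2" using prime_ge_2_nat[OF assms(2)] .
  let ?L = "lag_poly p b"
  show "coeff (euler_op [:-b, 1:] ?L) n = coeff (monom 1 p + [:b - b ^ p:]) n"
  proof (cases n)
    case 0
    have "b * gbin (b - 1) (p - 1) = b - b * b ^ (p - 1)"
      using gbin_diff_1_pred_CHAR[OF assms, of b] by (simp add: right_diff_distrib)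
    also have "b * b ^ (p - 1) = b ^ p" using p2 by (simp flip: power_Suc)
    finally have "b * gbin (b - 1) (p - 1) = b - b ^ p" .
    then show ?thesis using 0 p2 by (simp add: euler_op_def coeff_lag_poly)
  next
    case (Suc k)
    consider "Suc k < p" | "Suc k = p" | "p < Suc k" by linarith
    then show ?thesis
    proof cases
      case 1
      then show ?thesis
        using Suc coeff_lag_poly_Suc_CHAR[OF assms(1,2) 1, of b] by (simp add: coeff_euler_op_Suc algebra_simps)
    next
      case 2
      then have "k = p - 1" by simp
      then have "coeff ?L k = -1" "coeff ?L (Suc k) = 0"
        using coeff_lag_poly_pred[OF assms, of b] 2 by (simp_all add: coeff_lag_poly)
      moreover have "coeff (monom 1 p + [:b - b ^ p:]) (Suc k) = 1" using 2 by (auto simp: coeff_pCons)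
      ultimately show ?thesis unfolding Suc coeff_euler_op_Suc by simp
    next
      case 3
      then show ?thesis using Suc by (simp add: coeff_euler_op_Suc coeff_lag_poly)
    qed
  qed
qed

definition lag_dilated :: "nat \<Rightarrow> 'k::field \<Rightarrow> nat \<Rightarrow> 'k poly" where
  "lag_dilated p a r = pcompose (lag_poly p (of_nat r * a)) [:0, of_nat r:]"

lemma lag_dilated_1: "lag_dilated p a 1 = lag_poly p a"
  by (simp add: lag_dilated_def)

lemma coeff_lag_dilated:
  "coeff (lag_dilated p a r) n = of_nat r ^ n * coeff (lag_poly p (of_nat r * a)) n"
  by (simp add: lag_dilated_def coeff_pcompose_linear)

lemma degree_lag_dilated:
  assumes "0 < p"
  shows "degree (lag_dilated p a r) < p"
proof -
  have "degree (lag_dilated p a r) \<le> p - 1"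
    by (rule degree_le) (auto simp: coeff_lag_dilated coeff_lag_poly)
  then show ?thesis using assms by simp
qed

lemma coeff_lag_dilated_pred:
  assumes "CHAR('k::field) = p" "prime p" "odd p" "\<not> p dvd r"
  shows "coeff (lag_dilated p (a::'k) r) (p - 1) = -1"
  using of_nat_power_pred_CHAR[OF assms(1,2,4)] coeff_lag_poly_pred[OF assms(1-3)]
  by (simp add: coeff_lag_dilated)

lemma euler_op_lag_dilated:
  assumes "CHAR('k::field) = p" "prime p" "odd p"
  shows "euler_op [:- (of_nat r * a), of_nat r:] (lag_dilated p (a::'k) r) =
    smult (of_nat r) (monom 1 p - [:a ^ p - a:])"
proof -
  have "euler_op [:- (of_nat r * a), of_nat r:] (lag_dilated p a r) =
      pcompose (euler_op [:- (of_nat r * a), 1:] (lag_poly p (of_nat r * a))) [:0, of_nat r:]"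
    unfolding lag_dilated_def by (simp add: euler_op_pcompose_dilate pcompose_pCons)
  also have "\<dots> = pcompose (monom 1 p + [:of_nat r * a - (of_nat r * a) ^ p:]) [:0, of_nat r:]"
    by (simp only: euler_op_lag_poly[OF assms])
  also have "\<dots> = smult (of_nat r) (monom 1 p - [:a ^ p - a:])"
    using of_nat_power_CHAR[OF assms(1,2), of r] prime_gt_0_nat[OF assms(2)]
    by (intro poly_eqI) (auto simp: coeff_pcompose_linear coeff_monom coeff_pCons
      power_mult_distrib algebra_simps split: nat.split)
  finally show ?thesis .
qed

lemma coeff_lag_poly_mult_coeff_lag_dilated:
  assumes "CHAR('k::field) = p" "prime p" "odd p" "0 < s" "s < p" "i < p"
  shows "coeff (lag_poly p a) i * coeff (lag_dilated p (a::'k) s) (p - 1 - i) =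
    - ((- (1 / of_nat s)) ^ i * gbin (a - 1) (p - 1 - i) * gbin (of_nat s * a - 1) i)"
proof -
  define S where "S = (of_nat s :: 'k)"
  have "S \<noteq> 0" unfolding S_def using of_nat_neq_0_CHAR[OF assms(1,4,5)] .
  have "S ^ (p - 1) = 1" unfolding S_def using assms(4,5)
    by (intro of_nat_power_pred_CHAR[OF assms(1,2)]) (auto dest: dvd_imp_le)
  then have "S ^ (p - 1 - i) * S ^ i = 1" using assms(6) by (simp flip: power_add)
  then have "S ^ (p - 1 - i) = (1 / S) ^ i"
    using \<open>S \<noteq> 0\<close> by (simp add: power_one_over field_simps)
  moreover have "even (p - 1 - i) \<longleftrightarrow> even i" using assms(3,6) by presburger
  then have "(-1 :: 'k) ^ (p - 1 - i) = (-1) ^ i" by (simp add: minus_one_power_iff)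
  moreover have "p - 1 - (p - 1 - i) = i" using assms(6) by simp
  ultimately have "coeff (lag_poly p a) i * coeff (lag_dilated p a s) (p - 1 - i) =
      (1 / S) ^ i * gbin (a - 1) (p - 1 - i) * gbin (S * a - 1) i
        / (of_nat (fact i) * of_nat (fact (p - 1 - i)))"
    using assms(6) unfolding S_def by (simp add: coeff_lag_dilated coeff_lag_poly)
  also have "(of_nat (fact i) * of_nat (fact (p - 1 - i)) :: 'k) = - ((-1) ^ i)"
    by (rule fact_mult_fact_CHAR[OF assms(1-3,6)])
  moreover have "x / (-1 :: 'k) ^ i = (-1) ^ i * x" for x by (simp add: minus_one_power_iff)
  ultimately show ?thesis unfolding S_def by (simp add: power_minus[of "1 / _"] divide_minus_right)
qed

lemma coeff_lag_poly_mult_dilated_pred: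
  assumes "CHAR('k::field) = p" "prime p" "odd p" "0 < s" "s < p"
  shows "coeff (lag_poly p a * lag_dilated p (a::'k) s) (p - 1) = - bcoef p 1 s a"
proof -
  have "{..p - 1} = {..<p}" using prime_gt_0_nat[OF assms(2)] by auto
  then have "coeff (lag_poly p a * lag_dilated p a s) (p - 1) =
      (\<Sum>i<p. coeff (lag_poly p a) i * coeff (lag_dilated p a s) (p - 1 - i))"
    by (simp only: coeff_mult)
  also have "\<dots> =
      (\<Sum>i<p. - ((- (1 / of_nat s)) ^ i * gbin (a - 1) (p - 1 - i) * gbin (of_nat s * a - 1) i))"
    by (rule sum.cong[OF refl], rule coeff_lag_poly_mult_coeff_lag_dilated[OF assms]) simp
  also have "\<dots> = - bcoef p 1 s a"
    unfolding bcoef_def by (simp add: sum_negf)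
  finally show ?thesis .
qed

lemma euler_op_lag_poly_mult_dilated:
  assumes "CHAR('k::field) = p" "prime p" "odd p"
  shows "euler_op [:- (of_nat (Suc s) * a), of_nat (Suc s):] (lag_poly p a * lag_dilated p (a::'k) s) =
    (lag_dilated p a s + smult (of_nat s) (lag_poly p a)) * (monom 1 p - [:a ^ p - a:])"
proof -
  have lin: "[:- (of_nat (Suc s) * a), of_nat (Suc s):] = [:- a, 1:] + [:- (of_nat s * a), of_nat s:]"
    by (simp add: algebra_simps)
  have L1: "euler_op [:- a, 1:] (lag_poly p a) = monom 1 p - [:a ^ p - a:]"
    using euler_op_lag_dilated[OF assms, of 1 a] unfolding lag_dilated_1 by simp
  show ?thesis unfolding lin euler_op_mult L1 euler_op_lag_dilated[OF assms, of s a]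
    by (simp add: algebra_simps smult_diff_left smult_diff_right)
qed

lemma sum_inverse_mult_coeff_lag_dilated_0:
  assumes "CHAR('k::field) = p" "prime p" "odd p"
  shows "(\<Sum>k\<in>{1..p-1}. 1 / of_nat k * coeff (lag_dilated p (a::'k) k) 0) = 0"
proof -
  have "coeff (lag_dilated p a k) 0 = 1 - a ^ (p - 1)" if "k \<in> {1..p-1}" for k
  proof -
    have "(of_nat k :: 'k) ^ (p - 1) = 1"
      using that by (intro of_nat_power_pred_CHAR[OF assms(1,2)]) (auto dest: dvd_imp_le)
    then show ?thesis using prime_gt_0_nat[OF assms(2)] gbin_diff_1_pred_CHAR[OF assms, of "of_nat k * a"]
      by (simp add: coeff_lag_dilated coeff_lag_poly power_mult_distrib)
  qed
  then have "(\<Sum>k\<in>{1..p-1}. 1 / of_nat k * coeff (lag_dilated p a k) 0) =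
      (\<Sum>k\<in>{1..p-1}. 1 / of_nat k) * (1 - a ^ (p - 1))"
    by (simp add: sum_distrib_right)
  then show ?thesis using sum_inverse_of_nat_CHAR[OF assms] by simp
qed

lemma sum_inverse_mult_coeff_lag_dilated:
  assumes "CHAR('k::field) = p" "prime p" "odd p" "0 < j" "j < p"
  shows "(\<Sum>k\<in>{1..p-1}. 1 / of_nat k * coeff (lag_dilated p (a::'k) k) j) = (if j = 1 then -1 else 0)"
proof -
  have p3: "p \<ge> 3" using prime_ge_2_nat[OF assms(2)] assms(3) by presburger
  have "1 / of_nat k * coeff (lag_dilated p a k) j =
      (-1) ^ j / of_nat (fact j) * (of_nat k ^ (j - 1) * gbin (of_nat k * a - 1) (p - 1 - j))"
    if "k \<in> {1..p-1}" for k
  proof -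
    have "(of_nat k :: 'k) \<noteq> 0" using that p3 by (intro of_nat_neq_0_CHAR[OF assms(1)]) auto
    moreover have "(of_nat k :: 'k) ^ j = of_nat k * of_nat k ^ (j - 1)"
      using assms(4) by (simp flip: power_Suc)
    ultimately show ?thesis using assms(5) by (simp add: coeff_lag_dilated coeff_lag_poly field_simps)
  qed
  then have "(\<Sum>k\<in>{1..p-1}. 1 / of_nat k * coeff (lag_dilated p a k) j) = (-1) ^ j / of_nat (fact j) *
      (\<Sum>k\<in>{1..p-1}. of_nat k ^ (j - 1) * gbin (of_nat k * a - 1) (p - 1 - j))"
    by (simp add: sum_distrib_left)
  also have "\<dots> = (-1) ^ j / of_nat (fact j) * - (0 ^ (j - 1) * gbin (-1) (p - 1 - j))"
    using sum_power_mult_gbin_CHAR[OF assms(1,2,4,5), of a] by simp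
  also have "gbin (-1 :: 'k) (p - 1 - j) = (-1) ^ (p - 1 - j)"
    using assms(1,5) prime_dvd_fact_iff[OF assms(2)]
    by (intro gbin_minus_1) (simp add: of_nat_eq_0_iff_char_dvd)
  finally show ?thesis using assms(3,4) p3 by (cases "j = 1") auto
qed

lemma sum_inverse_smult_lag_dilated:
  assumes "CHAR('k::field) = p" "prime p" "odd p"
  shows "(\<Sum>k\<in>{1..p-1}. smult (1 / of_nat k) (lag_dilated p (a::'k) k)) = - [:0, 1:]"
proof (rule poly_eqI)
  fix j
  have "coeff (\<Sum>k\<in>{1..p-1}. smult (1 / of_nat k) (lag_dilated p a k)) j =
      (\<Sum>k\<in>{1..p-1}. 1 / of_nat k * coeff (lag_dilated p a k) j)"
    by (simp add: coeff_sum)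
  moreover consider "j = 0" | "0 < j" "j < p" | "p \<le> j" by linarith
  then have "(\<Sum>k\<in>{1..p-1}. 1 / of_nat k * coeff (lag_dilated p a k) j) = coeff (- [:0, 1:]) j"
  proof cases
    case 2
    then show ?thesis using sum_inverse_mult_coeff_lag_dilated[OF assms 2, of a]
      by (auto simp: coeff_pCons split: nat.split)
  next
    case 3
    have "p \<ge> 2" using prime_ge_2_nat[OF assms(2)] .
    with 3 show ?thesis by (simp add: coeff_lag_dilated coeff_lag_poly coeff_pCons split: nat.split)
  qed (use sum_inverse_mult_coeff_lag_dilated_0[OF assms, of a] in simp)
  ultimately show "coeff (\<Sum>k\<in>{1..p-1}. smult (1 / of_nat k) (lag_dilated p a k)) j =
      coeff (- [:0, 1:]) j"
    by simp
qed

section \<open>Reduction modulo X^p - (a^p - a)\<close>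

lemma degree_monom_minus_const:
  assumes "0 < p"
  shows "degree (monom 1 p - [:c::'a::comm_ring_1:]) = p"
proof -
  have "monom 1 p - [:c:] = monom 1 p + [:- c:]" by simp
  also have "degree \<dots> = p"
    using assms by (subst degree_add_eq_left) (auto simp: degree_monom_eq)
  finally show ?thesis .
qed

lemma pderiv_monom_minus_const_CHAR:
  assumes "CHAR('k::field) = p"
  shows "pderiv (monom 1 p - [:c::'k:]) = 0"
  using assms of_nat_CHAR[where 'a='k] by (simp add: pderiv_diff pderiv_monom pderiv_pCons)

lemma coeff_mod_monom_minus_const:
  fixes c :: "'k::field"
  assumes "p \<ge> 2" "degree F \<le> 2 * p - 2"
  shows "coeff (F mod (monom 1 p - [:c:])) (p - 1) = coeff F (p - 1)"
proof -
  define m where "m = monom 1 p - [:c:]"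
  define q where "q = F div m"
  have dm: "degree m = p" unfolding m_def using assms(1) by (simp add: degree_monom_minus_const)
  have "coeff (q * m) (p - 1) = 0"
  proof (cases "q = 0")
    case False
    have "degree (F mod m) < p" using dm assms(1) degree_mod_less[of m F] by fastforce
    then have "degree (q * m) \<le> 2 * p - 2"
      using assms(2) degree_diff_le_max[of F "F mod m"] unfolding q_def
      by (simp add: minus_mod_eq_div_mult [symmetric])
    moreover have "m \<noteq> 0" using dm assms(1) by auto
    ultimately have "degree q + p \<le> 2 * p - 2" using False dm by (simp add: degree_mult_eq)
    then have "coeff q (p - 1) = 0" using assms(1) by (intro coeff_eq_0) simp
    moreover have "coeff (q * monom 1 p) (p - 1) = 0"
      using assms(1) by (simp add: mult.commute[of q] coeff_monom_mult)
    ultimately show ?thesis unfolding m_def by (simp add: algebra_simps)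
  qed simp
  moreover have "F = q * m + F mod m" unfolding q_def by simp
  ultimately show ?thesis unfolding m_def[symmetric] by (metis add_0 coeff_add)
qed

lemma degree_mod_monom_minus_const:
  assumes "0 < p"
  shows "degree (F mod (monom 1 p - [:c::'k::field:])) < p"
proof -
  have "degree (monom 1 p - [:c:]) = p" by (rule degree_monom_minus_const[OF assms])
  moreover from this have "monom 1 p - [:c:] \<noteq> 0" using assms by auto
  ultimately show ?thesis
    using degree_mod_less[of "monom 1 p - [:c:]" F] assms by (cases "F mod (monom 1 p - [:c:]) = 0") auto
qed

lemma coeff_lag_poly_mult_dilated_mod_pred:
  assumes "CHAR('k::field) = p" "prime p" "odd p" "0 < s" "s < p"
  shows "coeff ((lag_poly p a * lag_dilated p a s) mod (monom 1 p - [:a ^ p - a:])) (p - 1) =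
    - bcoef p 1 s (a::'k)"
proof -
  have p2: "p \<ge> 2" using prime_ge_2_nat[OF assms(2)] .
  have "degree (lag_poly p a * lag_dilated p a s) \<le> (p - 1) + (p - 1)"
    using p2 degree_lag_poly[of p a] degree_lag_dilated[of p a s]
    by (intro order.trans[OF degree_mult_le] add_mono) auto
  then have "degree (lag_poly p a * lag_dilated p a s) \<le> 2 * p - 2" by simp
  from coeff_mod_monom_minus_const[OF p2 this, of "a ^ p - a"] show ?thesis
    using coeff_lag_poly_mult_dilated_pred[OF assms, of a] by simp
qed

lemma lag_poly_mult_dilated_mod:
  assumes "CHAR('k::field) = p" "prime p" "odd p" "0 < s" "Suc s < p"
  shows "(lag_poly p a * lag_dilated p a s) mod (monom 1 p - [:a ^ p - a:]) =
    smult (bcoef p 1 s a) (lag_dilated p (a::'k) (Suc s))"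
proof -
  \<comment> \<open>Both sides satisfy X y' = (s + 1) (X - a) y (mod m), have degree < p and the same
    coefficient of X^(p-1).\<close>
  have p2: "p \<ge> 2" using prime_ge_2_nat[OF assms(2)] .
  define m where "m = monom 1 p - [:a ^ p - a:]"
  define F where "F = lag_poly p a * lag_dilated p a s"
  define H where "H = lag_dilated p a (Suc s)"
  define y where "y = F mod m - smult (bcoef p 1 s a) H"
  define d where "d = - (of_nat (Suc s) * a)"
  define c where "c = (of_nat (Suc s) :: 'k)"
  have dm: "degree m = p" unfolding m_def using p2 by (simp add: degree_monom_minus_const)
  have "m dvd euler_op [:d, c:] F"
    using euler_op_lag_poly_mult_dilated[OF assms(1-3), of s a] unfolding F_def m_def c_def d_def by simp
  then have "m dvd euler_op [:d, c:] (F mod m)"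
    using dvd_euler_op_mod pderiv_monom_minus_const_CHAR[OF assms(1)] unfolding m_def by blast
  moreover have "euler_op [:d, c:] H = smult c m"
    using euler_op_lag_dilated[OF assms(1-3), of "Suc s" a] unfolding H_def m_def c_def d_def by simp
  ultimately have "m dvd euler_op [:d, c:] y"
    unfolding y_def euler_op_diff_smult by (simp add: dvd_diff dvd_smult)
  moreover have "c \<noteq> 0" unfolding c_def
    using of_nat_neq_0_CHAR[OF assms(1), of "Suc s"] assms(5) by (simp del: of_nat_Suc)
  moreover have "degree y < p"
    unfolding y_def H_def m_def F_def using p2 degree_lag_dilated[of p a "Suc s"]
    by (intro degree_diff_less degree_mod_monom_minus_const le_less_trans[OF degree_smult_le]) auto
  moreover have "coeff y (p - 1) = 0"
  proof -
    have "\<not> p dvd Suc s" using assms(5) by (auto dest: dvd_imp_le)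
    then show ?thesis
      using coeff_lag_poly_mult_dilated_mod_pred[OF assms(1-4) Suc_lessD[OF assms(5)]]
        coeff_lag_dilated_pred[OF assms(1-3)]
      unfolding y_def F_def H_def m_def by simp
  qed
  ultimately have "y = 0" using dvd_euler_op_imp_eq_0[OF dm] by blast
  then show ?thesis unfolding y_def F_def H_def m_def by simp
qed

lemma lag_poly_power_mod:
  assumes "CHAR('k::field) = p" "prime p" "odd p" "0 < k" "k < p"
  shows "lag_poly p a ^ k mod (monom 1 p - [:a ^ p - a:]) =
    smult (\<Prod>s\<in>{1..k-1}. bcoef p 1 s a) (lag_dilated p (a::'k) k)"
  using assms(4,5)
proof (induction k)
  case 0
  then show ?case by simp
next
  case (Suc k)
  define m where "m = monom 1 p - [:a ^ p - a:]"
  have p2: "p \<ge> 2" using prime_ge_2_nat[OF assms(2)] .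
  show ?case
  proof (cases "k = 0")
    case True
    have "degree (lag_poly p a) < degree m"
      unfolding m_def using degree_lag_poly[of p a] degree_monom_minus_const[of p "a ^ p - a"] p2 by simp
    then show ?thesis using True by (simp add: mod_poly_less lag_dilated_1[unfolded One_nat_def] m_def)
  next
    case False
    have "lag_poly p a ^ Suc k mod m = (lag_poly p a * (lag_poly p a ^ k mod m)) mod m"
      by (simp add: mod_mult_right_eq)
    also have "\<dots> = smult (\<Prod>s\<in>{1..k-1}. bcoef p 1 s a) ((lag_poly p a * lag_dilated p a k) mod m)"
      using Suc False unfolding m_def by (simp add: mod_smult_left)
    also have "\<dots> = smult ((\<Prod>s\<in>{1..k-1}. bcoef p 1 s a) * bcoef p 1 k a) (lag_dilated p a (Suc k))"
      using lag_poly_mult_dilated_mod[OF assms(1-3), of k a] False Suc.prems unfolding m_def by simp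
    also have "(\<Prod>s\<in>{1..k-1}. bcoef p 1 s a) * bcoef p 1 k a =
        (\<Prod>s\<in>{1..Suc k - 1}. bcoef p 1 s a)"
    proof -
      have "{1..Suc k - 1} = insert k {1..k-1}" "k \<notin> {1..k-1}" using False by auto
      then show ?thesis by (simp add: mult.commute)
    qed
    finally show ?thesis unfolding m_def .
  qed
qed

lemma pcompose_monom: "pcompose (monom c n) q = smult c (q ^ n)"
  by (induction n) (simp_all add: monom_0 monom_Suc pcompose_pCons algebra_simps)

lemma pcompose_power_left: "pcompose (f ^ n) q = pcompose f q ^ n"
  by (induction n) (simp_all add: pcompose_mult pcompose_1)

lemma poly_mod_sum: "sum f A mod (m::'k::field poly) = (\<Sum>i\<in>A. f i mod m)"
  by (induction A rule: infinite_finite_induct) (simp_all add: poly_mod_add_left)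

lemma dvd_pcompose_diff:
  fixes f g :: "'a::comm_ring_1 poly"
  assumes "m dvd f - g"
  shows "m dvd pcompose h f - pcompose h g"
proof (induction h)
  case (pCons c h)
  have "pcompose (pCons c h) f - pcompose (pCons c h) g =
      f * (pcompose h f - pcompose h g) + (f - g) * pcompose h g"
    by (simp add: pcompose_pCons algebra_simps)
  then show ?case using pCons assms by (metis dvd_add dvd_mult dvd_mult2)
qed simp

lemma Gpoly_pcompose_lag_poly_mod:
  assumes "CHAR('k::field) = p" "prime p" "odd p"
    and "\<And>s. 0 < s \<Longrightarrow> Suc s < p \<Longrightarrow> bcoef p 1 s (a::'k) \<noteq> 0"
  shows "pcompose (Gpoly p a) (lag_poly p a) mod (monom 1 p - [:a ^ p - a:]) = [:0, 1:]"
proof -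
  define m where "m = monom 1 p - [:a ^ p - a:]"
  define \<mu> where "\<mu> k = (\<Prod>s\<in>{1..k-1}. bcoef p 1 s a)" for k
  have "pcompose (Gpoly p a) (lag_poly p a) mod m =
      - (\<Sum>k\<in>{1..p-1}. smult (1 / of_nat k / \<mu> k) (lag_poly p a ^ k mod m))"
    unfolding Gpoly_def \<mu>_def
    by (simp add: pcompose_uminus pcompose_sum pcompose_monom poly_mod_sum mod_smult_left)
  also have "\<dots> = - (\<Sum>k\<in>{1..p-1}. smult (1 / of_nat k) (lag_dilated p a k))"
  proof (intro arg_cong[where f = uminus] sum.cong refl)
    fix k assume k: "k \<in> {1..p-1}"
    then have "\<mu> k \<noteq> 0" unfolding \<mu>_def using assms(4) by (auto simp: prod_zero_iff)
    moreover have "lag_poly p a ^ k mod m = smult (\<mu> k) (lag_dilated p a k)"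
      unfolding \<mu>_def m_def using k prime_gt_0_nat[OF assms(2)]
      by (intro lag_poly_power_mod[OF assms(1-3)]) auto
    ultimately show "smult (1 / of_nat k / \<mu> k) (lag_poly p a ^ k mod m) =
        smult (1 / of_nat k) (lag_dilated p a k)" by simp
  qed
  also have "\<dots> = [:0, 1:]" using sum_inverse_smult_lag_dilated[OF assms(1-3), of a] by simp
  finally show ?thesis unfolding m_def .
qed

lemma lag_poly_power_CHAR:
  assumes "CHAR('k::field) = p" "prime p" "odd p"
  shows "lag_poly p (a::'k) ^ p = pcompose (lag_poly p (a ^ p)) (monom 1 p)"
proof -
  define l where "l b k = gbin (b - 1) (p - 1 - k) * (-1) ^ k / of_nat (fact k)" for b :: 'k and k
  have l_power: "l a k ^ p = l (a ^ p) k" for k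
  proof -
    have "((-1::'k) ^ k) ^ p = ((-1) ^ p) ^ k" by (simp flip: power_mult add: mult.commute)
    then have "((-1::'k) ^ k) ^ p = (-1) ^ k" using assms(3) by simp
    then show ?thesis unfolding l_def power_divide power_mult_distrib gbin_power_CHAR[OF assms(1,2)]
      power_diff_CHAR[OF assms(1,2)] of_nat_power_CHAR[OF assms(1,2)] by simp
  qed
  have "lag_poly p a ^ p = (\<Sum>k<p. monom (l a k) k ^ p)"
    unfolding lag_poly_def l_def using assms(1,2) by (intro freshmans_dream_sum) auto
  also have "\<dots> = (\<Sum>k<p. pcompose (monom (l (a ^ p) k) k) (monom 1 p))"
    by (simp add: monom_power l_power pcompose_monom smult_monom mult.commute)
  also have "\<dots> = pcompose (lag_poly p (a ^ p)) (monom 1 p)"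
    unfolding lag_poly_def l_def by (simp add: pcompose_sum)
  finally show ?thesis .
qed

lemma dvd_lag_poly_power_diff_const:
  assumes "CHAR('k::field) = p" "prime p" "odd p"
  shows "monom 1 p - [:a ^ p - a:] dvd lag_poly p (a::'k) ^ p - [:poly (lag_poly p (a ^ p)) (a ^ p - a):]"
  using dvd_pcompose_diff[of "monom 1 p - [:a ^ p - a:]" "monom 1 p" "[:a ^ p - a:]" "lag_poly p (a ^ p)"]
  by (simp add: lag_poly_power_CHAR[OF assms] pcompose_pCons_0)

section \<open>Exchanging the order of composition\<close>

interpretation poly_vs: vector_space "smult :: 'a::field \<Rightarrow> 'a poly \<Rightarrow> 'a poly"
  by unfold_locales (simp_all add: smult_add_right smult_add_left)

lemma independent_monoms: "poly_vs.independent ((\<lambda>j. monom (1::'k::field) j) ` {..<p})"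
proof
  define M where "M = (\<lambda>j. monom (1::'k) j) ` {..<p}"
  assume "poly_vs.dependent M"
  then obtain i where i: "i < p" and sp: "monom 1 i \<in> poly_vs.span (M - {monom 1 i})"
    unfolding poly_vs.dependent_def M_def by auto
  have "coeff x i = 0" if "x \<in> poly_vs.span (M - {monom 1 i})" for x
    using that by (induction rule: poly_vs.span_induct_alt) (auto simp: M_def coeff_monom split: if_splits)
  from this[OF sp] show False by simp
qed

lemma pcompose_eq_sum_smult_power:
  assumes "degree q < d"
  shows "pcompose q L = (\<Sum>i<d. smult (coeff q i) (L ^ i))"
proof -
  have "q = (\<Sum>i<d. monom (coeff q i) i)"
    using poly_as_sum_of_monoms'[of q "d - 1"] assms by (simp add: lessThan_Suc_atMost[symmetric])
  then show ?thesis by (metis (no_types, lifting) pcompose_monom pcompose_sum sum.cong)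
qed

lemma pcompose_mod_in_span_powers:
  fixes r L m :: "'k::field poly"
  assumes "m dvd pcompose r L" "r \<noteq> 0"
  shows "pcompose f L mod m \<in> poly_vs.span ((\<lambda>i. L ^ i mod m) ` {..<degree r})"
proof -
  obtain k where k: "pcompose r L = m * k" using assms(1) by blast
  have "f = f div r * r + f mod r" by simp
  then have "pcompose f L = pcompose (f div r) L * pcompose r L + pcompose (f mod r) L"
    by (metis pcompose_add pcompose_mult)
  then have "pcompose f L = m * (k * pcompose (f div r) L) + pcompose (f mod r) L"
    using k by (simp add: algebra_simps)
  then have "pcompose f L mod m = pcompose (f mod r) L mod m" by (simp only: mod_mult_self4)
  also have "\<dots> = (\<Sum>i<degree r. smult (coeff (f mod r) i) (L ^ i mod m))"
  proof (cases "f mod r = 0")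
    case False
    then have "degree (f mod r) < degree r" using assms(2) degree_mod_less by blast
    then show ?thesis by (simp add: pcompose_eq_sum_smult_power poly_mod_sum mod_smult_left)
  qed simp
  also have "\<dots> \<in> poly_vs.span ((\<lambda>i. L ^ i mod m) ` {..<degree r})"
    by (rule poly_vs.span_sum, rule poly_vs.span_scale, rule poly_vs.span_base) simp
  finally show ?thesis .
qed

lemma eq_0_if_dvd_pcompose:
  fixes r L G m :: "'k::field poly"
  assumes "degree m = p" "pcompose G L mod m = [:0, 1:]" "m dvd pcompose r L" "degree r < p"
  shows "r = 0"
proof (rule ccontr)
  \<comment> \<open>The p independent monomials X^j = G(L)^j mod m would lie in a span of
    degree r < p vectors.\<close>
  assume "r \<noteq> 0"
  define B where "B = (\<lambda>i. L ^ i mod m) ` {..<degree r}"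
  have "(\<lambda>j. monom 1 j) ` {..<p} \<subseteq> poly_vs.span B"
  proof safe
    fix j assume "j < p"
    then have "monom 1 j = [:0, 1:] ^ j mod m"
      using assms(1) by (simp add: monom_altdef mod_poly_less degree_linear_power)
    also have "\<dots> = (pcompose G L mod m) ^ j mod m" using assms(2) by simp
    also have "\<dots> = pcompose (G ^ j) L mod m" by (simp add: power_mod pcompose_power_left)
    finally show "monom 1 j \<in> poly_vs.span B"
      unfolding B_def using pcompose_mod_in_span_powers[OF assms(3) \<open>r \<noteq> 0\<close>] by simp
  qed
  then have "finite ((\<lambda>j. monom (1::'k) j) ` {..<p}) \<and>
      card ((\<lambda>j. monom (1::'k) j) ` {..<p}) \<le> card B"
    by (intro poly_vs.independent_span_bound[OF _ independent_monoms]) (simp add: B_def)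
  moreover have "card ((\<lambda>j. monom (1::'k) j) ` {..<p}) = p"
    by (subst card_image) (auto simp: inj_on_def monom_eq_iff')
  moreover have "card B \<le> degree r" unfolding B_def by (metis card_image_le card_lessThan finite_lessThan)
  ultimately show False using assms(4) by simp
qed

lemma dvd_pcompose_diff_X_swap:
  fixes L G m :: "'k::field poly"
  assumes "0 < p" "degree m = p" "pcompose G L mod m = [:0, 1:]" "m dvd L ^ p - [:c:]"
  shows "monom 1 p - [:c:] dvd pcompose L G - [:0, 1:]"
proof -
  define n where "n = monom 1 p - [:c:]"
  define u where "u = pcompose L G - [:0, 1:]"
  have "[:0, 1:] mod m = [:0, 1:]" using assms(3) by (metis mod_mod_trivial)
  then have "m dvd pcompose G L - [:0, 1:]" using assms(3) by (metis mod_eq_dvd_iff)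
  then have "m dvd pcompose L (pcompose G L) - pcompose L [:0, 1:]" by (rule dvd_pcompose_diff)
  then have "m dvd pcompose u L" unfolding u_def by (simp add: pcompose_diff pcompose_assoc pcompose_pCons)
  moreover have "m dvd pcompose n L" using assms(4) unfolding n_def by (simp add: pcompose_diff pcompose_monom)
  moreover have "pcompose u L = pcompose (u div n) L * pcompose n L + pcompose (u mod n) L"
    by (metis div_mult_mod_eq pcompose_add pcompose_mult)
  ultimately have "m dvd pcompose (u mod n) L" by (metis dvd_add_right_iff dvd_mult)
  moreover have "degree (u mod n) < p"
    unfolding n_def by (rule degree_mod_monom_minus_const[OF assms(1)])
  ultimately have "u mod n = 0" using eq_0_if_dvd_pcompose[OF assms(2,3)] by blast
  then show ?thesis unfolding n_def u_def by (simp add: mod_eq_0_iff_dvd)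
qed

lemma dvd_lag_poly_pcompose_Gpoly_diff_X:
  assumes "CHAR('k::field) = p" "prime p" "odd p"
    and "\<And>s. 0 < s \<Longrightarrow> Suc s < p \<Longrightarrow> bcoef p 1 s (a::'k) \<noteq> 0"
  shows "monom 1 p - [:poly (lag_poly p (a ^ p)) (a ^ p - a):] dvd
    pcompose (lag_poly p a) (Gpoly p a) - [:0, 1:]"
proof (rule dvd_pcompose_diff_X_swap)
  show "0 < p" using prime_gt_0_nat[OF assms(2)] .
  then show "degree (monom 1 p - [:a ^ p - a:]) = p" by (rule degree_monom_minus_const)
  show "pcompose (Gpoly p a) (lag_poly p a) mod (monom 1 p - [:a ^ p - a:]) = [:0, 1:]"
    by (rule Gpoly_pcompose_lag_poly_mod[OF assms])
  show "monom 1 p - [:a ^ p - a:] dvd lag_poly p a ^ p - [:poly (lag_poly p (a ^ p)) (a ^ p - a):]"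
    by (rule dvd_lag_poly_power_diff_const[OF assms(1-3)])
qed

section \<open>The generic parameter\<close>

lemma to_fract_prod: "to_fract (prod f A) = (\<Prod>x\<in>A. to_fract (f x))"
  by (induction A rule: infinite_finite_induct) simp_all

lemma to_fract_smult: "to_fract (smult c q) = to_fract [:c:] * to_fract q"
  by (simp flip: to_fract_mult)

lemma to_fract_const_mult: "to_fract [:a * b:] = to_fract [:a:] * to_fract [:b::'k::field:]"
  by (simp flip: to_fract_mult)

lemma to_fract_const_power: "to_fract [:a ^ k:] = to_fract [:a::'k::field:] ^ k"
  by (induction k) (simp_all add: to_fract_const_mult flip: one_pCons)

lemma to_fract_const_inverse: "to_fract [:inverse c:] = inverse (to_fract [:c::'k::field:])"
proof (cases "c = 0")
  case False
  then have "[:inverse c:] * [:c:] = (1 :: 'k poly)" by (simp add: one_pCons)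
  then have "to_fract [:c:] * to_fract [:inverse c:] = 1" by (metis to_fract_1 to_fract_mult mult.commute)
  then show ?thesis by (metis inverse_unique)
qed simp

lemma to_fract_const_of_nat: "to_fract [:of_nat n :: 'k::field:] = of_nat n"
  by (simp add: of_nat_poly flip: to_fract_of_nat)

lemma to_fract_gbin_poly: "to_fract (gbin_poly m (q :: 'k::field poly)) = gbin (to_fract q) m"
proof -
  have "to_fract [:inverse (of_nat (fact m)) :: 'k:] = inverse (of_nat (fact m))"
    by (simp only: to_fract_const_inverse to_fract_const_of_nat)
  then show ?thesis
    unfolding gbin_poly_def gbin_def to_fract_smult
    by (simp add: to_fract_prod to_fract_of_nat divide_inverse mult.commute)
qed

lemma bcoef_at_0:
  assumes "CHAR('k::field) = p" "prime p" "odd p" "0 < s" "Suc s < p"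
  shows "bcoef p 1 s (0::'k) = 1"
proof -
  define q where "q = - (1 / of_nat s :: 'k)"
  have "gbin (-1 :: 'k) (p - 1 - k) * gbin (-1) k = 1" if "k < p" for k
  proof -
    have "(of_nat (fact i) :: 'k) \<noteq> 0" if "i < p" for i
      using that assms(1) prime_dvd_fact_iff[OF assms(2)] by (simp add: of_nat_eq_0_iff_char_dvd)
    then have "gbin (-1 :: 'k) (p - 1 - k) * gbin (-1) k = (-1) ^ (p - 1 - k) * (-1) ^ k"
      using that by (simp add: gbin_minus_1)
    also have "\<dots> = (-1) ^ (p - 1)" using that by (simp flip: power_add)
    finally show ?thesis using assms(3) by simp
  qed
  then have "bcoef p 1 s (0::'k) = (\<Sum>k<p. q ^ k)"
    unfolding bcoef_def q_def by (intro sum.cong) (simp_all add: mult.assoc)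
  moreover have "q \<noteq> 1"
  proof
    assume "q = 1"
    then have "(of_nat s :: 'k) = -1"
      unfolding q_def using of_nat_neq_0_CHAR[OF assms(1,4)] assms(5) by (auto simp: field_simps)
    then have "(of_nat (Suc s) :: 'k) = 0" by simp
    then show False using of_nat_neq_0_CHAR[OF assms(1), of "Suc s"] assms(5) by (simp del: of_nat_Suc)
  qed
  moreover have "q ^ p = q"
    unfolding q_def using minus_power_prime_CHAR[of p "1 / of_nat s :: 'k"] assms(1,2)
    by (simp add: power_one_over of_nat_power_CHAR[OF assms(1,2)])
  ultimately show ?thesis by (simp add: sum_gp_strict)
qed

lemma bcoef_alpha_neq_0:
  assumes "CHAR('k::field) = p" "prime p" "odd p" "0 < s" "Suc s < p"
  shows "bcoef p 1 s (alpha :: 'k poly fract) \<noteq> 0"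
proof -
  \<comment> \<open>b_{1,s}(alpha) is the image of a polynomial B over 'k with B(0) = b_{1,s}(0) = 1.\<close>
  define q where "q = - (1 / of_nat s :: 'k)"
  define B where
    "B = (\<Sum>k<p. smult (q ^ k) (gbin_poly (p - 1 - k) [:-1, 1:] * gbin_poly k [:-1, of_nat s:]))"
  have "poly B 0 = bcoef p 1 s 0"
    unfolding B_def bcoef_def q_def by (simp add: poly_sum poly_gbin_poly mult.assoc)
  then have "B \<noteq> 0" using bcoef_at_0[OF assms] by auto
  moreover have "to_fract B = bcoef p 1 s alpha"
  proof -
    have "to_fract [:q:] = to_fract (- [:inverse (of_nat s):])" unfolding q_def by (simp add: divide_inverse)
    also have "\<dots> = - inverse (of_nat s)"
      by (simp only: to_fract_uminus to_fract_const_inverse to_fract_const_of_nat)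
    finally have "to_fract [:q:] = - (1 / of_nat s)" by (simp add: divide_inverse)
    moreover have "to_fract [:-1, 1:] = alpha - (1 :: 'k poly fract)"
      "to_fract [:-1, of_nat s:] = of_nat s * alpha - (1 :: 'k poly fract)"
    proof -
      have X: "[:-1, 1:] = [:0, 1:] - (1 :: 'k poly)"
        "[:-1, of_nat s:] = of_nat s * [:0, 1:] - (1 :: 'k poly)"
        by (simp_all add: of_nat_poly one_pCons)
      have "alpha = to_fract [:0, 1 :: 'k:]" by (simp add: alpha_def to_fract_def)
      then show "to_fract [:-1, 1:] = alpha - (1 :: 'k poly fract)"
        "to_fract [:-1, of_nat s:] = of_nat s * alpha - (1 :: 'k poly fract)"
        unfolding X by (simp_all only: to_fract_diff to_fract_mult to_fract_1 to_fract_of_nat)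
    qed
    ultimately show ?thesis
      unfolding B_def bcoef_def
      by (simp add: to_fract_smult to_fract_const_power to_fract_gbin_poly mult.assoc)
  qed
  ultimately show ?thesis by auto
qed

theorem corollary3:
  fixes p :: nat
  assumes "prime p" and "odd p" and "CARD('a) = p"
  shows "(monom 1 p - [: poly (lag_poly p ((alpha :: ('a::{field,finite}) poly fract) ^ p)) (alpha ^ p - alpha) :])
           dvd (pcompose (lag_poly p (alpha :: 'a poly fract)) (Gpoly p alpha) - [:0, 1:])"
proof -
  have "CHAR('a) = p" using CHAR_eq_card_prime[OF assms(3,1)] .
  then have char: "CHAR('a poly fract) = p" by (simp add: CHAR_fract)
  show ?thesis
    using dvd_lag_poly_pcompose_Gpoly_diff_X[OF char assms(1,2)]
      bcoef_alpha_neq_0[OF \<open>CHAR('a) = p\<close> assms(1,2)] by blast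
qed

end
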